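(* Let $A$ be a sincere Nakayama algebra over an algebraically closed field $K$ with $n$ simple modules. Then $A$ has finite global dimension if and only if $A$ has a unique (up to isomorphism) indecomposable projective module of dimension $n$, i.e. exactly one index $i$ with $c_i=n$ in its Kupisch series. Moreover, for such algebras of finite global dimension, after cyclically rotating the Kupisch series so that $c_0=n$, the map sending $A$ with Kupisch series $[c_0,\dots,c_{n-1}]$ to the Dyck path $D$ with area sequence \[ [c_1-n+1,\ c_2-n+1,\ \dots,\ c_{n-1}-n+1,\ 1] \] is a bijection between (isomorphism classes of) sincere Nakayama algebras of finite global dimension with $n$ simple modules and Dyck paths of semilength $n-1$. Furthermore, \[ \operatorname{gldim} A = 2\cdot b_D, \] where $b_D$ is the bounce count of $D$.
   Context: Nakayama algebras are connected finite-dimensional algebras all of whose indecomposable modules are uniserial; they are given as bound quiver algebras $KQ/I$ with $Q$ the linear quiver $0\to1\to\cdots\to n-1$ or the cyclic quiver $0\to1\to\cdots\to n-1\to 0$ and $I$ admissible. Such an algebra is determined up to isomorphism by its Kupisch series $[c_0,\dots,c_{n-1}]$, $c_i=\dim_K e_iA$ (indices extended mod $n$); for cyclic ones, Kupisch series are exactly the sequences with $c_{i+1}+1\ge c_i\ge 2$ for all $i$ (indices mod $n$), and cyclic rotations of the Kupisch series give isomorphic algebras. An algebra is sincere if every indecomposable projective module has every simple module as a composition factor. A Dyck path of semilength $m$ is a lattice path from $(0,0)$ to $(2m,0)$ with steps $(1,1),(1,-1)$ never going below the $x$-axis. Its area sequence $[c_0,\dots,c_m]$ is defined by letting $c_k$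 be the largest integer such that $(2k+c_k-1,c_k-1)$ lies on the path; area sequences of Dyck paths of semilength $m$ are exactly the sequences with $c_{i+1}+1\ge c_i\ge 2$ for $0\le i\le m-1$ and $c_m=1$. The bounce path of a Dyck path with area sequence $[c_0,\dots,c_m]$: set $b_0=0$ and $b_{t+1}=b_t+c_{b_t}-1$ (from $(2b_t,0)$ the bounce path takes $c_{b_t}-1$ up steps then $c_{b_t}-1$ down steps, arriving at $(2b_{t+1},0)$); the bounce count $b_D$ is the number $d$ of steps until $b_d=m$. *)

theory Defs
  imports Main "HOL-Library.Extended_Nat"
begin

text \<open>A Kupisch series is a list cs = [c_0,...,c_{n-1}], n = length cs.
  Linear Nakayama algebras (linear quiver 0 -> 1 -> ... -> n-1) and cyclic ones.\<close>

definition kupisch_linear :: "nat list \<Rightarrow> bool" where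
  "kupisch_linear cs \<longleftrightarrow> length cs \<ge> 1 \<and> cs ! (length cs - 1) = 1 \<and>
     (\<forall>i. i + 1 < length cs \<longrightarrow> cs ! i \<ge> 2 \<and> cs ! (i + 1) + 1 \<ge> cs ! i)"

definition kupisch_cyclic :: "nat list \<Rightarrow> bool" where
  "kupisch_cyclic cs \<longleftrightarrow> length cs \<ge> 1 \<and>
     (\<forall>i < length cs. cs ! i \<ge> 2 \<and> cs ! ((i + 1) mod length cs) + 1 \<ge> cs ! i)"

definition nakayama :: "nat \<Rightarrow> nat list \<Rightarrow> bool" where
  "nakayama n cs \<longleftrightarrow> length cs = n \<and> (kupisch_linear cs \<or> kupisch_cyclic cs)"

definition kupisch_iso :: "nat list \<Rightarrow> nat list \<Rightarrow> bool" where
  "kupisch_iso cs ds \<longleftrightarrow> cs = ds \<or>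
     (kupisch_cyclic cs \<and> kupisch_cyclic ds \<and> (\<exists>k. ds = rotate k cs))"

text \<open>Composition factors (indices of simple modules) of the indecomposable projective P_i:
  P_i is uniserial with composition factors S_i, S_{i+1}, ..., S_{i+c_i-1} (indices mod n).\<close>
definition proj_comp_factors :: "nat list \<Rightarrow> nat \<Rightarrow> nat set" where
  "proj_comp_factors cs i = {(i + j) mod length cs | j. j < cs ! i}"

definition sincere :: "nat list \<Rightarrow> bool" where
  "sincere cs \<longleftrightarrow> (\<forall>i < length cs. proj_comp_factors cs i = {0..<length cs})"

text \<open>Indecomposable modules are uniserial M(i,l): top S_i, length l, 1 <= l <= c_i.
  M(i,l) is projective iff l = c_i (then it is P_i); otherwise its projective cover is P_i
  and its first syzygy is rad^l P_i = M(i+l, c_i - l).\<close>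

definition is_proj_mod :: "nat list \<Rightarrow> nat \<times> nat \<Rightarrow> bool" where
  "is_proj_mod cs M \<longleftrightarrow> snd M = cs ! fst M"

definition syzygy :: "nat list \<Rightarrow> nat \<times> nat \<Rightarrow> nat \<times> nat" where
  "syzygy cs M = ((fst M + snd M) mod length cs, cs ! fst M - snd M)"

definition proj_dim :: "nat list \<Rightarrow> nat \<times> nat \<Rightarrow> enat" where
  "proj_dim cs M =
     (if \<exists>k. is_proj_mod cs ((syzygy cs ^^ k) M)
      then enat (LEAST k. is_proj_mod cs ((syzygy cs ^^ k) M))
      else \<infinity>)"

definition indec_modules :: "nat list \<Rightarrow> (nat \<times> nat) set" where
  "indec_modules cs = {(i, l). i < length cs \<and> 1 \<le> l \<and> l \<le> cs ! i}"

definition gldim :: "nat list \<Rightarrow> enat" where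
  "gldim cs = (SUP M \<in> indec_modules cs. proj_dim cs M)"

text \<open>A path is a list of steps, True = up step (1,1), False = down step (1,-1).\<close>

definition height :: "bool list \<Rightarrow> nat \<Rightarrow> int" where
  "height p x = (\<Sum>s \<leftarrow> take x p. if s then 1 else -1)"

definition dyck_path :: "nat \<Rightarrow> bool list \<Rightarrow> bool" where
  "dyck_path m p \<longleftrightarrow> length p = 2 * m \<and> (\<forall>x \<le> 2 * m. height p x \<ge> 0) \<and> height p (2 * m) = 0"

definition on_path :: "bool list \<Rightarrow> nat \<Rightarrow> int \<Rightarrow> bool" where
  "on_path p x y \<longleftrightarrow> x \<le> length p \<and> height p x = y"

definition area_seq :: "bool list \<Rightarrow> nat list" where
  "area_seq p = map (\<lambda>k. GREATEST c::nat. c \<ge> 1 \<and> on_path p (2 * k + c - 1) (int c - 1))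
                    [0..<length p div 2 + 1]"

fun bounce_pts :: "nat list \<Rightarrow> nat \<Rightarrow> nat" where
  "bounce_pts cs 0 = 0"
| "bounce_pts cs (Suc t) = bounce_pts cs t + cs ! (bounce_pts cs t) - 1"

definition bounce_count_seq :: "nat list \<Rightarrow> nat" where
  "bounce_count_seq cs = (LEAST d. bounce_pts cs d = length cs - 1)"

definition bounce_count :: "bool list \<Rightarrow> nat" where
  "bounce_count p = bounce_count_seq (area_seq p)"

definition kupisch_dyck :: "nat \<Rightarrow> nat list \<Rightarrow> bool list \<Rightarrow> bool" where
  "kupisch_dyck n cs p \<longleftrightarrow> cs ! 0 = n \<and>
     area_seq p = map (\<lambda>c. c + 1 - n) (tl cs) @ [1]"

end

theory Submission
  imports Defs
begin

(* Sincerity means c_i >= n for every i. Unroll the quiver along the naturals: with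
   F x = x + c_(x mod n), the projective cover of the uniserial module [a, b) is [a, F a) and
   its syzygy is [b, F a). So the syzygies of [a, b) are the intervals [x_m, x_(m+1)) of the
   sequence x_0 = a, x_1 = b, x_(m+2) = F x_m, and the m-th one is projective iff
   x_(m+1) = x_(m+2). If no c_i equals n, this never happens for [0, n); if c_i = c_j = n with
   i < j, it never happens for [i, j). If c_r = n for exactly one r, then G x = F x - n fixes
   the points r + kn and moves every other point strictly up, so the D-th iterate of G maps the
   whole window (r, r + n] to r + n, where D is the number of G-steps from r + 1 to r + n. This
   makes every module projective after at most 2D syzygies, with equality for the simple module
   at r. In the Kupisch series rotated to start at r, the G-orbit of r + 1 is the bounce path of
   the area sequence [c_(r+1) - n + 1, ..., c_(r+n-1) - n + 1, 1], and Dyck paths of semilength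
   m correspond bijectively to such sequences of length m + 1. *)

section \<open>Dyck paths and their area sequences\<close>

definition downs :: "bool list \<Rightarrow> nat \<Rightarrow> nat" where
  "downs p x = length (filter Not (take x p))"

lemma sum_list_steps:
  "(\<Sum>s \<leftarrow> q. if s then 1 else -1 :: int) = int (length q) - 2 * int (length (filter Not q))"
  by (induction q) auto

lemma height_eq_downs: "height p x = int (min x (length p)) - 2 * int (downs p x)"
  unfolding height_def downs_def sum_list_steps by simp

lemma downs_0 [simp]: "downs p 0 = 0"
  by (simp add: downs_def)

lemma downs_Suc: "downs p (Suc x) = downs p x + (if x < length p \<and> \<not> p ! x then 1 else 0)"
  by (cases "x < length p") (simp_all add: downs_def take_Suc_conv_app_nth)

lemma downs_Suc_le: "downs p (Suc x) \<le> Suc (downs p x)"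
  by (simp add: downs_Suc)

lemma downs_mono: "x \<le> y \<Longrightarrow> downs p x \<le> downs p y"
  by (rule lift_Suc_mono_le[of "downs p"]) (simp_all add: downs_Suc)

lemma downs_attains:
  assumes "k \<le> downs p y"
  obtains x where "x \<le> y" "downs p x = k"
proof -
  define x where "x = (LEAST x. k \<le> downs p x)"
  have "k \<le> downs p x" and "x \<le> y"
    unfolding x_def using assms by (auto intro: LeastI Least_le)
  moreover have "downs p x = k"
  proof (cases x)
    case (Suc z)
    then have "\<not> k \<le> downs p z"
      using not_less_Least[of z "\<lambda>x. k \<le> downs p x"] x_def by simp
    then show ?thesis using \<open>k \<le> downs p x\<close> downs_Suc_le[of p z] Suc by simp
  qed (use \<open>k \<le> downs p x\<close> in simp)
  ultimately show ?thesis using that by blast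
qed

lemma dyck_path_iff_downs:
  "dyck_path m p \<longleftrightarrow> length p = 2*m \<and> (\<forall>x \<le> 2*m. 2 * downs p x \<le> x) \<and> downs p (2*m) = m"
  unfolding dyck_path_def height_eq_downs by auto

lemma length_area_seq: "length (area_seq p) = length p div 2 + 1"
  unfolding area_seq_def by simp

lemma area_seq_nth:
  assumes "k \<le> length p div 2"
  shows "area_seq p ! k =
    (GREATEST c::nat. 1 \<le> c \<and> 2*k + c - 1 \<le> length p \<and> downs p (2*k + c - 1) = k)"
proof -
  have "(\<lambda>c::nat. 1 \<le> c \<and> on_path p (2*k + c - 1) (int c - 1)) =
        (\<lambda>c. 1 \<le> c \<and> 2*k + c - 1 \<le> length p \<and> downs p (2*k + c - 1) = k)"
    by (rule ext) (auto simp: on_path_def height_eq_downs)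
  then show ?thesis
    unfolding area_seq_def using assms by (simp del: upt_Suc add: nth_map_upt)
qed

lemma area_seq_nth_eqI:
  assumes "length p = 2*m" "k \<le> m" "M \<le> 2*m" "downs p M = k" "2*k \<le> M"
    and last: "\<And>y. y \<le> 2*m \<Longrightarrow> downs p y = k \<Longrightarrow> y \<le> M"
  shows "area_seq p ! k = M + 1 - 2*k"
proof -
  have "area_seq p ! k =
      (GREATEST c::nat. 1 \<le> c \<and> 2*k + c - 1 \<le> length p \<and> downs p (2*k + c - 1) = k)"
    using assms(1,2) by (intro area_seq_nth) simp
  also have "\<dots> = M + 1 - 2*k"
  proof (rule Greatest_equality)
    fix c assume c: "1 \<le> c \<and> 2*k + c - 1 \<le> length p \<and> downs p (2*k + c - 1) = k"
    then have "2*k + c - 1 \<le> M" using last assms(1) by simp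
    then show "c \<le> M + 1 - 2*k" using c by simp
  qed (use assms in simp)
  finally show ?thesis .
qed

lemma dyck_path_level_end:
  assumes "dyck_path m p" "k \<le> m"
  obtains M where "M \<le> 2*m" "downs p M = k" "2*k \<le> M"
    "\<And>y. y \<le> 2*m \<Longrightarrow> downs p y = k \<Longrightarrow> y \<le> M" "area_seq p ! k = M + 1 - 2*k"
proof -
  have p: "length p = 2*m" "\<And>x. x \<le> 2*m \<Longrightarrow> 2 * downs p x \<le> x" "downs p (2*m) = m"
    using assms(1) by (auto simp: dyck_path_iff_downs)
  define P where "P x \<longleftrightarrow> x \<le> 2*m \<and> downs p x = k" for x
  obtain x where "P x"
    using downs_attains[of k p "2*m"] p(3) assms(2) unfolding P_def by metis
  define M where "M = Greatest P"
  have "P M"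
    unfolding M_def by (rule GreatestI_nat[of P x "2*m"]) (use \<open>P x\<close> in \<open>auto simp: P_def\<close>)
  moreover have last: "y \<le> M" if "P y" for y
    unfolding M_def by (rule Greatest_le_nat[of P y "2*m"]) (use that in \<open>auto simp: P_def\<close>)
  moreover have "2*k \<le> M" using p(2) \<open>P M\<close> unfolding P_def by auto
  ultimately show ?thesis
    using that area_seq_nth_eqI[OF p(1) assms(2), of M] unfolding P_def by blast
qed

lemma dyck_path_downs_le_iff:
  assumes "dyck_path m p" "k \<le> m" "x \<le> 2*m"
  shows "downs p x \<le> k \<longleftrightarrow> x \<le> area_seq p ! k + 2*k - 1"
proof -
  obtain M where M: "M \<le> 2*m" "downs p M = k" "2*k \<le> M"
    "\<And>y. y \<le> 2*m \<Longrightarrow> downs p y = k \<Longrightarrow> y \<le> M" "area_seq p ! k = M + 1 - 2*k"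
    using dyck_path_level_end[OF assms(1,2)] by blast
  have "downs p x \<le> k \<longleftrightarrow> x \<le> M"
  proof
    assume "downs p x \<le> k"
    then show "x \<le> M" using M downs_mono[of M x p] assms(3) by (cases "x \<le> M") auto
  qed (use M downs_mono[of x M p] in auto)
  then show ?thesis using M by simp
qed

lemma dyck_path_area_seq_inj:
  assumes "dyck_path m p" "dyck_path m q" "area_seq p = area_seq q"
  shows "p = q"
proof -
  have p: "length p = 2*m" "downs p (2*m) = m" and q: "length q = 2*m" "downs q (2*m) = m"
    using assms(1,2) by (auto simp: dyck_path_iff_downs)
  have downs_eq: "downs p x = downs q x" if "x \<le> 2*m" for x
  proof -
    have "downs p x \<le> m" "downs q x \<le> m"
      using downs_mono[OF that, of p] downs_mono[OF that, of q] p q by auto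
    moreover have "downs p x \<le> k \<longleftrightarrow> downs q x \<le> k" if "k \<le> m" for k
      using dyck_path_downs_le_iff[OF assms(1) that \<open>x \<le> 2*m\<close>]
        dyck_path_downs_le_iff[OF assms(2) that \<open>x \<le> 2*m\<close>] assms(3) by simp
    ultimately show ?thesis by (meson le_antisym order_refl)
  qed
  show "p = q"
  proof (rule nth_equalityI)
    fix j assume "j < length p"
    then have "downs p (Suc j) = downs q (Suc j)" "downs p j = downs q j"
      using p by (auto intro!: downs_eq)
    then show "p ! j = q ! j"
      using downs_Suc[of p j] downs_Suc[of q j] \<open>j < length p\<close> p q by (auto split: if_splits)
  qed (use p q in simp)
qed

definition area_sequence :: "nat \<Rightarrow> nat list \<Rightarrow> bool" where
  "area_sequence m A \<longleftrightarrow> length A = m + 1 \<and> A ! m = 1 \<and>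
     (\<forall>k < m. 2 \<le> A ! k \<and> A ! k \<le> A ! Suc k + 1)"

lemma dyck_path_area_sequence:
  assumes "dyck_path m p"
  shows "area_sequence m (area_seq p)"
  unfolding area_sequence_def
proof (intro conjI allI impI)
  have p: "length p = 2*m" "\<And>x. x \<le> 2*m \<Longrightarrow> 2 * downs p x \<le> x"
    using assms by (auto simp: dyck_path_iff_downs)
  show "length (area_seq p) = m + 1" using p(1) by (simp add: length_area_seq)
  show "area_seq p ! m = 1"
    using dyck_path_level_end[OF assms, of m] by auto
  fix k assume "k < m"
  obtain M where M: "M \<le> 2*m" "downs p M = k"
    "\<And>y. y \<le> 2*m \<Longrightarrow> downs p y = k \<Longrightarrow> y \<le> M" "area_seq p ! k = M + 1 - 2*k"
    using dyck_path_level_end[OF assms, of k] \<open>k < m\<close> by auto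
  obtain M' where M': "downs p M' = Suc k" "area_seq p ! Suc k = M' + 1 - 2 * Suc k"
    using dyck_path_level_end[OF assms, of "Suc k"] \<open>k < m\<close> by auto
  have "M < 2*m"
    using M(1,2) \<open>k < m\<close> assms by (cases "M = 2*m") (auto simp: dyck_path_iff_downs)
  then have "downs p (Suc M) \<noteq> k" using M(3)[of "Suc M"] by auto
  then have "downs p (Suc M) = Suc k"
    using M(2) downs_Suc_le[of p M] downs_mono[of M "Suc M" p] by simp
  then have "2*k + 1 \<le> M" using p(2)[of "Suc M"] \<open>M < 2*m\<close> by simp
  then show "2 \<le> area_seq p ! k" using M(4) by simp
  have "M < M'" using M(2) M'(1) downs_mono[of M' M p] by (cases "M < M'") auto
  then show "area_seq p ! k \<le> area_seq p ! Suc k + 1" using M(4) M'(2) by simp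
qed

lemma downs_map_not_mem:
  assumes "x \<le> N"
  shows "downs (map (\<lambda>j. j \<notin> S) [0..<N]) x = card {j \<in> S. j < x}"
proof -
  have "take x (map (\<lambda>j. j \<notin> S) [0..<N]) = map (\<lambda>j. j \<notin> S) [0..<x]"
    using assms by (simp add: take_map min_def)
  moreover have "{i. i < x \<and> \<not> map (\<lambda>j. j \<notin> S) [0..<x] ! i} = {j \<in> S. j < x}" by auto
  ultimately show ?thesis by (simp add: downs_def length_filter_conv_card)
qed

lemma downs_down_positions_le_iff:
  fixes M :: "nat \<Rightarrow> nat"
  assumes mono: "strict_mono_on {..m} M" and last: "M m = 2*m" and "k \<le> m" "x \<le> 2*m"
  shows "downs (map (\<lambda>j. j \<notin> M ` {..<m}) [0..<2*m]) x \<le> k \<longleftrightarrow> x \<le> M k"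
proof -
  let ?S = "{k'. k' < m \<and> M k' < x}"
  have "{j \<in> M ` {..<m}. j < x} = M ` ?S" by auto
  moreover have "inj_on M ?S"
    using strict_mono_on_imp_inj_on[OF mono] by (rule inj_on_subset) auto
  ultimately have downs_eq: "downs (map (\<lambda>j. j \<notin> M ` {..<m}) [0..<2*m]) x = card ?S"
    using downs_map_not_mem[OF \<open>x \<le> 2*m\<close>] by (simp add: card_image)
  show ?thesis
  proof
    assume "x \<le> M k"
    moreover have "k' < k" if "k' < m" "M k' < x" for k'
      using strict_mono_on_less[OF mono, of k' k] that \<open>x \<le> M k\<close> \<open>k \<le> m\<close> by simp
    ultimately have "?S \<subseteq> {..<k}" by auto
    then show "downs (map (\<lambda>j. j \<notin> M ` {..<m}) [0..<2*m]) x \<le> k"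
      using downs_eq card_mono[of "{..<k}" ?S] by simp
  next
    assume "downs (map (\<lambda>j. j \<notin> M ` {..<m}) [0..<2*m]) x \<le> k"
    show "x \<le> M k"
    proof (rule ccontr)
      assume "\<not> x \<le> M k"
      then have "k < m" using last assms(3,4) by (cases "k = m") auto
      moreover have "M k' < x" if "k' \<le> k" for k'
        using strict_mono_on_leD[OF mono, of k' k] that \<open>k < m\<close> \<open>\<not> x \<le> M k\<close> by simp
      ultimately have "{..k} \<subseteq> ?S" by auto
      then have "Suc k \<le> card ?S" using card_mono[of ?S "{..k}"] by simp
      then show False using downs_eq \<open>downs _ x \<le> k\<close> by simp
    qed
  qed
qed

lemma dyck_path_of_down_positions:
  fixes M :: "nat \<Rightarrow> nat"
  assumes mono: "strict_mono_on {..m} M" and last: "M m = 2*m"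
    and above: "\<And>k. k < m \<Longrightarrow> 2*k < M k"
  defines "p \<equiv> map (\<lambda>j. j \<notin> M ` {..<m}) [0..<2*m]"
  shows "dyck_path m p" and "k \<le> m \<Longrightarrow> area_seq p ! k = M k + 1 - 2*k"
proof -
  have downs_le_iff: "downs p x \<le> k \<longleftrightarrow> x \<le> M k" if "k \<le> m" "x \<le> 2*m" for k x
    unfolding p_def using downs_down_positions_le_iff[OF mono last that] .
  have M_le: "M k \<le> 2*m" if "k \<le> m" for k
    using strict_mono_on_leD[OF mono, of k m] last that by simp
  have downs_M: "downs p (M k) = k" if "k \<le> m" for k
  proof (cases k)
    case 0 then show ?thesis using downs_le_iff[of 0 "M 0"] M_le that by simp
  next
    case (Suc j)
    have "M j < M k" using strict_mono_on_less[OF mono] Suc that by auto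
    then show ?thesis using downs_le_iff[of k "M k"] downs_le_iff[of j "M k"] M_le that Suc by auto
  qed
  have below: "2 * downs p x \<le> x" if "x \<le> 2*m" for x
  proof (cases "downs p x")
    case (Suc j)
    have "downs p x \<le> m" using downs_le_iff[of m x] last that by simp
    then have "M j < x" using downs_le_iff[of j x] Suc that by simp
    then show ?thesis using above[of j] Suc \<open>downs p x \<le> m\<close> by simp
  qed simp
  have "length p = 2*m" unfolding p_def by simp
  then show "dyck_path m p"
    unfolding dyck_path_iff_downs using below downs_M[of m] last by simp
  show "area_seq p ! k = M k + 1 - 2*k" if "k \<le> m"
  proof (rule area_seq_nth_eqI[OF \<open>length p = 2*m\<close> that M_le[OF that] downs_M[OF that]])
    show "2*k \<le> M k" using above[of k] last that by (cases "k = m") auto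
  qed (use downs_le_iff that in auto)
qed

lemma area_sequence_imp_area_seq:
  assumes "area_sequence m A"
  obtains p where "dyck_path m p" "area_seq p = A"
proof -
  have A: "length A = m + 1" "A ! m = 1" "\<And>k. k < m \<Longrightarrow> 2 \<le> A ! k \<and> A ! k \<le> A ! Suc k + 1"
    using assms unfolding area_sequence_def by auto
  have A_pos: "1 \<le> A ! k" if "k \<le> m" for k
    using A(2) A(3)[of k] that by (cases "k = m") auto
  define M where "M k = A ! k + 2*k - 1" for k
  let ?p = "map (\<lambda>j. j \<notin> M ` {..<m}) [0..<2*m]"
  have step: "M k < M (Suc k)" if "k \<in> {..<m}" for k using A(3) that unfolding M_def by fastforce
  have "strict_mono_on {..m} M"
  proof (rule strict_mono_onI)
    fix i j assume "i \<in> {..m}" "j \<in> {..m}" "i < j"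
    then show "M i < M j" by (intro lift_Suc_mono_less_ivl[where N = "{..<m}" and f = M, OF step]) auto
  qed
  moreover have "M m = 2*m" using A(2) by (simp add: M_def)
  moreover have "2*k < M k" if "k < m" for k using A(3)[OF that] unfolding M_def by arith
  ultimately have "dyck_path m ?p" and area: "\<And>k. k \<le> m \<Longrightarrow> area_seq ?p ! k = M k + 1 - 2*k"
    using dyck_path_of_down_positions by blast+
  moreover have "area_seq ?p = A"
  proof (rule nth_equalityI)
    fix k assume "k < length (area_seq ?p)"
    then have "k \<le> m" by (simp add: length_area_seq)
    then show "area_seq ?p ! k = A ! k" using area[of k] A_pos[of k] unfolding M_def by simp
  qed (simp add: length_area_seq A(1))
  ultimately show ?thesis using that by blast
qed

section \<open>Sincere Nakayama algebras\<close>

lemma proj_comp_factors_eq_image: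
  "proj_comp_factors cs i = (\<lambda>j. (i + j) mod length cs) ` {..<cs ! i}"
  unfolding proj_comp_factors_def by auto

lemma sincere_iff_ge_length:
  assumes "length cs = n" "1 \<le> n"
  shows "sincere cs \<longleftrightarrow> (\<forall>i<n. n \<le> cs ! i)"
proof
  assume "sincere cs"
  show "\<forall>i<n. n \<le> cs ! i"
  proof (intro allI impI)
    fix i assume "i < n"
    then have "{0..<n} = (\<lambda>j. (i + j) mod n) ` {..<cs ! i}"
      using \<open>sincere cs\<close> assms(1) unfolding sincere_def proj_comp_factors_eq_image by simp
    then have "card {0..<n} \<le> card {..<cs ! i}" by (metis card_image_le finite_lessThan)
    then show "n \<le> cs ! i" by simp
  qed
next
  assume ge: "\<forall>i<n. n \<le> cs ! i"
  show "sincere cs"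
    unfolding sincere_def proj_comp_factors_eq_image assms(1)
  proof (intro allI impI equalityI subsetI)
    fix i t assume "i < n" "t \<in> {0..<n}"
    define j where "j = (t + n - i) mod n"
    have "j < n" unfolding j_def using assms(2) by simp
    then have "j < cs ! i" using ge \<open>i < n\<close> by (meson less_le_trans)
    moreover have "(i + j) mod n = t"
      using \<open>i < n\<close> \<open>t \<in> {0..<n}\<close> unfolding j_def by (simp add: mod_add_right_eq)
    ultimately show "t \<in> (\<lambda>j. (i + j) mod n) ` {..<cs ! i}" by force
  qed (use assms(2) in auto)
qed

lemma kupisch_linear_sincere_length:
  assumes "kupisch_linear cs" "sincere cs"
  shows "length cs = 1"
proof -
  have "1 \<le> length cs" "cs ! (length cs - 1) = 1"
    using assms(1) unfolding kupisch_linear_def by auto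
  moreover have "length cs \<le> cs ! (length cs - 1)"
    using assms(2) sincere_iff_ge_length[of cs "length cs"] \<open>1 \<le> length cs\<close> by simp
  ultimately show ?thesis by simp
qed

lemma kupisch_cyclic_rotate:
  assumes "kupisch_cyclic cs"
  shows "kupisch_cyclic (rotate k cs)"
  unfolding kupisch_cyclic_def length_rotate
proof (intro conjI allI impI)
  let ?n = "length cs"
  show "1 \<le> ?n" using assms unfolding kupisch_cyclic_def by simp
  fix i assume "i < ?n"
  then have "0 < ?n" by linarith
  define j where "j = (k + i) mod ?n"
  have "j < ?n" "(j + 1) mod ?n = (k + (i + 1) mod ?n) mod ?n"
    unfolding j_def using \<open>0 < ?n\<close> by (auto simp: mod_Suc_eq mod_add_right_eq)
  moreover have "rotate k cs ! i = cs ! j" "rotate k cs ! ((i + 1) mod ?n) = cs ! ((k + (i + 1) mod ?n) mod ?n)"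
    unfolding j_def using \<open>i < ?n\<close> \<open>0 < ?n\<close> by (auto simp: nth_rotate)
  ultimately show "2 \<le> rotate k cs ! i" "rotate k cs ! i \<le> rotate k cs ! ((i + 1) mod ?n) + 1"
    using assms unfolding kupisch_cyclic_def by auto
qed

locale sincere_nakayama =
  fixes n :: nat and cs :: "nat list"
  assumes nakayama: "nakayama n cs" and sincere: "sincere cs"

lemma sincere_nakayama_iff:
  "sincere_nakayama n cs \<longleftrightarrow> length cs = n \<and> 1 \<le> n \<and>
     (\<forall>i<n. n \<le> cs ! i \<and> cs ! i \<le> cs ! ((i + 1) mod n) + 1)"
proof
  assume "sincere_nakayama n cs"
  then have nak: "nakayama n cs" and "sincere cs" by (simp_all add: sincere_nakayama_def)
  then have len: "length cs = n" and "1 \<le> n"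
    unfolding nakayama_def kupisch_linear_def kupisch_cyclic_def by auto
  moreover have "n \<le> cs ! i" if "i < n" for i
    using sincere_iff_ge_length[OF len \<open>1 \<le> n\<close>] \<open>sincere cs\<close> that by simp
  moreover have "cs ! i \<le> cs ! ((i + 1) mod n) + 1" if "i < n" for i
  proof (cases "kupisch_cyclic cs")
    case False
    then have "n = 1"
      using nak \<open>sincere cs\<close> kupisch_linear_sincere_length len unfolding nakayama_def by auto
    then show ?thesis using that by simp
  qed (use len that in \<open>simp add: kupisch_cyclic_def\<close>)
  ultimately show "length cs = n \<and> 1 \<le> n \<and> (\<forall>i<n. n \<le> cs ! i \<and> cs ! i \<le> cs ! ((i + 1) mod n) + 1)"
    by blast
next
  assume cs: "length cs = n \<and> 1 \<le> n \<and> (\<forall>i<n. n \<le> cs ! i \<and> cs ! i \<le> cs ! ((i + 1) mod n) + 1)"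
  have "kupisch_linear cs \<or> kupisch_cyclic cs"
  proof (cases "\<forall>i<n. 2 \<le> cs ! i")
    case True
    then show ?thesis using cs unfolding kupisch_cyclic_def by auto
  next
    case False
    then obtain i where "i < n" "cs ! i < 2" by auto
    moreover have "n \<le> cs ! i" "1 \<le> n" using cs \<open>i < n\<close> by blast+
    ultimately have "n = 1" by linarith
    with \<open>i < n\<close> \<open>cs ! i < 2\<close> \<open>n \<le> cs ! i\<close> have "cs ! 0 = 1" by simp
    then show ?thesis using cs \<open>n = 1\<close> unfolding kupisch_linear_def by auto
  qed
  then show "sincere_nakayama n cs"
    using cs sincere_iff_ge_length[of cs n] unfolding sincere_nakayama_def nakayama_def by auto
qed

context sincere_nakayama
begin

lemma length_cs: "length cs = n" and n_pos: "1 \<le> n"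
  and n_le_cs: "i < n \<Longrightarrow> n \<le> cs ! i"
  and cs_le_succ: "i < n \<Longrightarrow> cs ! i \<le> cs ! ((i + 1) mod n) + 1"
  using sincere_nakayama_axioms unfolding sincere_nakayama_iff by auto

lemma n_le_set_cs: "c \<in> set cs \<Longrightarrow> n \<le> c"
  using n_le_cs length_cs by (auto simp: in_set_conv_nth)

lemma kupisch_iso_rotate: "kupisch_iso cs (rotate k cs)"
proof (cases "n = 1")
  case False
  then have "kupisch_cyclic cs"
    using nakayama sincere kupisch_linear_sincere_length length_cs unfolding nakayama_def by auto
  then show ?thesis unfolding kupisch_iso_def using kupisch_cyclic_rotate by blast
qed (simp add: kupisch_iso_def length_cs)

section \<open>Syzygies of interval modules\<close>

text \<open>Unroll the cyclic quiver along the naturals: the point x stands for the simple module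
  S_(x mod n), the projective P_(x mod n) becomes the interval [x, proj_end x), and M(i, l) is any
  interval [a, a + l) with a mod n = i (see module_of).\<close>

definition proj_end :: "nat \<Rightarrow> nat" where
  "proj_end x = x + cs ! (x mod n)"

lemma proj_end_ge: "x + n \<le> proj_end x"
  unfolding proj_end_def using n_le_cs[of "x mod n"] n_pos by simp

lemma proj_end_mono: "x \<le> y \<Longrightarrow> proj_end x \<le> proj_end y"
proof (rule lift_Suc_mono_le[of proj_end])
  fix x
  have "Suc x mod n = (x mod n + 1) mod n" by (simp add: mod_Suc_eq)
  then show "proj_end x \<le> proj_end (Suc x)"
    unfolding proj_end_def using cs_le_succ[of "x mod n"] n_pos by simp
qed

lemma proj_end_add_period: "proj_end (x + k*n) = proj_end x + k*n"
  unfolding proj_end_def by simp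

lemma funpow_proj_end_add_period: "(proj_end ^^ j) (x + k*n) = (proj_end ^^ j) x + k*n"
  by (induction j) (simp_all add: proj_end_add_period)

lemma funpow_proj_end_minimal:
  assumes "cs ! (x mod n) = n"
  shows "(proj_end ^^ k) x = x + k*n"
proof (induction k)
  case (Suc k)
  have "proj_end (x + k*n) = x + n + k*n"
    using proj_end_add_period[of x k] assms by (simp add: proj_end_def)
  then show ?case using Suc by simp
qed simp

fun syz_seq :: "nat \<Rightarrow> nat \<Rightarrow> nat \<Rightarrow> nat" where
  "syz_seq a b 0 = a"
| "syz_seq a b (Suc 0) = b"
| "syz_seq a b (Suc (Suc m)) = proj_end (syz_seq a b m)"

lemma syz_seq_even: "syz_seq a b (2*k) = (proj_end ^^ k) a"
  by (induction k) simp_all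

lemma syz_seq_odd: "syz_seq a b (Suc (2*k)) = (proj_end ^^ k) b"
  by (induction k) simp_all

lemma syz_seq_Suc_le:
  assumes "a \<le> b" "b \<le> proj_end a"
  shows "syz_seq a b m \<le> syz_seq a b (Suc m)"
proof -
  have "syz_seq a b m \<le> syz_seq a b (Suc m) \<and> syz_seq a b (Suc m) \<le> syz_seq a b (Suc (Suc m))"
    by (induction m) (use assms proj_end_mono in auto)
  then show ?thesis ..
qed

definition module_of :: "nat \<Rightarrow> nat \<Rightarrow> nat \<times> nat" where
  "module_of a b = (a mod n, b - a)"

lemma syzygy_module_of:
  assumes "a \<le> b"
  shows "syzygy cs (module_of a b) = module_of b (proj_end a)"
proof -
  have "(a mod n + (b - a)) mod n = b mod n"
    using assms by (metis mod_add_left_eq le_add_diff_inverse)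
  then show ?thesis
    unfolding syzygy_def module_of_def proj_end_def using assms by (simp add: length_cs)
qed

lemma syzygy_pow_module_of:
  assumes "a \<le> b" "b \<le> proj_end a"
  shows "(syzygy cs ^^ m) (module_of a b) = module_of (syz_seq a b m) (syz_seq a b (Suc m))"
  by (induction m) (simp_all add: syzygy_module_of syz_seq_Suc_le[OF assms])

lemma is_proj_mod_module_of: "a \<le> b \<Longrightarrow> is_proj_mod cs (module_of a b) \<longleftrightarrow> b = proj_end a"
  unfolding is_proj_mod_def module_of_def proj_end_def by auto

lemma is_proj_mod_syzygy_pow:
  assumes "a \<le> b" "b \<le> proj_end a"
  shows "is_proj_mod cs ((syzygy cs ^^ m) (module_of a b)) \<longleftrightarrow>
    syz_seq a b (Suc m) = syz_seq a b (Suc (Suc m))"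
  using syzygy_pow_module_of[OF assms] is_proj_mod_module_of syz_seq_Suc_le[OF assms] by simp

lemma proj_dim_module_of_le:
  assumes "a \<le> b" "b \<le> proj_end a" "syz_seq a b (Suc m) = syz_seq a b (Suc (Suc m))"
  shows "proj_dim cs (module_of a b) \<le> enat m"
  unfolding proj_dim_def using is_proj_mod_syzygy_pow[OF assms(1,2)] assms(3)
  by (auto intro: Least_le)

lemma proj_dim_module_of_eq:
  assumes "a \<le> b" "b \<le> proj_end a" "syz_seq a b (Suc m) = syz_seq a b (Suc (Suc m))"
    and "\<And>j. j < m \<Longrightarrow> syz_seq a b (Suc j) \<noteq> syz_seq a b (Suc (Suc j))"
  shows "proj_dim cs (module_of a b) = enat m"
  unfolding proj_dim_def using is_proj_mod_syzygy_pow[OF assms(1,2)] assms(3,4)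
  by (auto intro!: Least_equality) (meson not_le)

lemma proj_dim_module_of_infinite:
  assumes "a \<le> b" "b \<le> proj_end a"
    and "\<And>m. syz_seq a b (Suc m) \<noteq> syz_seq a b (Suc (Suc m))"
  shows "proj_dim cs (module_of a b) = \<infinity>"
  unfolding proj_dim_def using is_proj_mod_syzygy_pow[OF assms(1,2)] assms(3) by simp

lemma indec_module_eq_module_of:
  assumes "(i, l) \<in> indec_modules cs" "a mod n = i"
  shows "(i, l) = module_of a (a + l)" "a + l \<le> proj_end a"
  using assms unfolding indec_modules_def module_of_def proj_end_def by auto

lemma proj_dim_le_gldim: "M \<in> indec_modules cs \<Longrightarrow> proj_dim cs M \<le> gldim cs"
  unfolding gldim_def by (rule SUP_upper)

lemma gldim_infinite_if_no_minimal:
  assumes "\<And>i. i < n \<Longrightarrow> cs ! i \<noteq> n"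
  shows "gldim cs = \<infinity>"
proof -
  let ?x = "syz_seq 0 n"
  have odd: "?x (Suc (2*k)) = ?x (2*k) + n" for k
    using funpow_proj_end_add_period[of k 0 1] by (simp add: syz_seq_even syz_seq_odd)
  have "?x (Suc m) \<noteq> ?x (Suc (Suc m))" for m
  proof (cases "even m")
    case True
    then obtain k where "m = 2*k" by blast
    moreover have "?x (2*k) + n < proj_end (?x (2*k))"
      using assms[of "?x (2*k) mod n"] n_le_cs[of "?x (2*k) mod n"] n_pos
      unfolding proj_end_def by fastforce
    ultimately show ?thesis using odd[of k] by simp
  next
    case False
    then obtain k where "m = Suc (2*k)" by (metis oddE Suc_eq_plus1)
    then show ?thesis using odd[of "Suc k"] n_pos by simp
  qed
  then have "proj_dim cs (module_of 0 n) = \<infinity>"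
    using proj_end_ge[of 0] by (intro proj_dim_module_of_infinite) auto
  moreover have "module_of 0 n \<in> indec_modules cs"
    using n_pos n_le_cs[of 0] by (simp add: module_of_def indec_modules_def length_cs)
  ultimately show ?thesis using proj_dim_le_gldim by fastforce
qed

lemma gldim_infinite_if_two_minimal:
  assumes "i < j" "j < n" "cs ! i = n" "cs ! j = n"
  shows "gldim cs = \<infinity>"
proof -
  let ?x = "syz_seq i j"
  have even: "?x (2*k) = i + k*n" and odd: "?x (Suc (2*k)) = j + k*n" for k
    using funpow_proj_end_minimal[of i k] funpow_proj_end_minimal[of j k] assms
    by (simp_all add: syz_seq_even syz_seq_odd)
  have "?x (Suc m) \<noteq> ?x (Suc (Suc m))" for m
  proof (cases "even m")
    case True
    then obtain k where "m = 2*k" by blast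
    then show ?thesis using odd[of k] even[of "Suc k"] assms(1,2) by simp
  next
    case False
    then obtain k where "m = Suc (2*k)" by (metis oddE Suc_eq_plus1)
    then show ?thesis using odd[of "Suc k"] even[of "Suc k"] assms(1) by simp
  qed
  moreover have "j \<le> proj_end i" using assms by (simp add: proj_end_def)
  ultimately have "proj_dim cs (module_of i j) = \<infinity>"
    using assms(1) by (intro proj_dim_module_of_infinite) auto
  moreover have "module_of i j \<in> indec_modules cs"
    using assms by (simp add: module_of_def indec_modules_def length_cs) arith
  ultimately show ?thesis using proj_dim_le_gldim by fastforce
qed

lemma gldim_infinite_unless_unique_minimal:
  assumes "card {i. i < n \<and> cs ! i = n} \<noteq> 1"
  shows "gldim cs = \<infinity>"
proof (cases "\<exists>i<n. cs ! i = n")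
  case True
  then obtain i where i: "i < n" "cs ! i = n" by blast
  have "\<exists>j. j < n \<and> cs ! j = n \<and> j \<noteq> i"
  proof (rule ccontr)
    assume "\<nexists>j. j < n \<and> cs ! j = n \<and> j \<noteq> i"
    then have "{i. i < n \<and> cs ! i = n} = {i}" using i by blast
    then show False using assms by simp
  qed
  then obtain j where j: "j < n" "cs ! j = n" "j \<noteq> i" by blast
  show ?thesis
  proof (cases "i < j")
    case True
    then show ?thesis using gldim_infinite_if_two_minimal i j by blast
  next
    case False
    then have "j < i" using \<open>j \<noteq> i\<close> by simp
    then show ?thesis using gldim_infinite_if_two_minimal i j by blast
  qed
next
  case False
  then show ?thesis by (intro gldim_infinite_if_no_minimal) auto
qed

end

section \<open>Global dimension with a unique projective of length n\<close>

locale unique_minimal_projective = sincere_nakayama +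
  fixes r :: nat
  assumes r_less: "r < n" and cs_r: "cs ! r = n"
    and minimal_unique: "i < n \<Longrightarrow> cs ! i = n \<Longrightarrow> i = r"
begin

definition bounce_map :: "nat \<Rightarrow> nat" where
  "bounce_map x = proj_end x - n"

lemma proj_end_eq_bounce_map: "proj_end x = bounce_map x + n"
  using proj_end_ge[of x] unfolding bounce_map_def by simp

lemma bounce_map_ge: "x \<le> bounce_map x"
  using proj_end_ge[of x] unfolding bounce_map_def by simp

lemma funpow_bounce_map_ge: "x \<le> (bounce_map ^^ j) x"
  by (induction j) (auto intro: order_trans[OF _ bounce_map_ge])

lemma funpow_bounce_map_mono: "x \<le> y \<Longrightarrow> (bounce_map ^^ j) x \<le> (bounce_map ^^ j) y"
  by (induction j) (auto simp: bounce_map_def proj_end_mono diff_le_mono)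

lemma funpow_bounce_map_add_period: "(bounce_map ^^ j) (x + k*n) = (bounce_map ^^ j) x + k*n"
proof (induction j)
  case (Suc j)
  have "bounce_map (y + k*n) = bounce_map y + k*n" for y
    using proj_end_add_period[of y k] proj_end_ge[of y] unfolding bounce_map_def by simp
  then show ?case using Suc by simp
qed simp

lemma funpow_proj_end_eq_bounce_map: "(proj_end ^^ k) x = (bounce_map ^^ k) x + k*n"
  by (induction k) (simp_all add: proj_end_eq_bounce_map[symmetric] proj_end_add_period)

lemma funpow_bounce_map_fixed: "(bounce_map ^^ j) (r + k*n) = r + k*n"
  using funpow_proj_end_minimal[of "r + k*n" j] funpow_proj_end_eq_bounce_map[of j "r + k*n"] cs_r r_less
  by simp

lemma bounce_map_gt:
  assumes "r < x" "x < r + n"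
  shows "x < bounce_map x"
proof -
  have "x mod n \<noteq> r"
  proof (cases "x < n")
    case False
    then have "x mod n = x - n" using assms r_less by (simp add: le_mod_geq)
    then show ?thesis using assms False by simp
  qed (use assms in simp)
  moreover have "x mod n < n" using n_pos by simp
  ultimately have "cs ! (x mod n) \<noteq> n" using minimal_unique by blast
  then show ?thesis
    using n_le_cs[of "x mod n"] n_pos unfolding bounce_map_def proj_end_def by fastforce
qed

lemma funpow_bounce_map_le: "x \<le> r + n \<Longrightarrow> (bounce_map ^^ j) x \<le> r + n"
  using funpow_bounce_map_mono[of x "r + n" j] funpow_bounce_map_fixed[of j 1] by simp

lemma funpow_bounce_map_reach: "min (r + 1 + j) (r + n) \<le> (bounce_map ^^ j) (r + 1)"
proof (induction j)
  case (Suc j)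
  define y where "y = (bounce_map ^^ j) (r + 1)"
  have "r + 1 \<le> y" "y \<le> r + n"
    unfolding y_def using funpow_bounce_map_ge funpow_bounce_map_le n_pos by auto
  show ?case
  proof (cases "y = r + n")
    case True
    then show ?thesis using funpow_bounce_map_fixed[of 1 1] y_def by simp
  next
    case False
    then have "y < bounce_map y" using bounce_map_gt \<open>r + 1 \<le> y\<close> \<open>y \<le> r + n\<close> by simp
    then show ?thesis using Suc y_def by simp
  qed
qed simp

definition bounce_steps :: nat where
  "bounce_steps = (LEAST d. (bounce_map ^^ d) (r + 1) = r + n)"

lemma funpow_bounce_steps: "(bounce_map ^^ bounce_steps) (r + 1) = r + n"
proof -
  have "(bounce_map ^^ (n - 1)) (r + 1) = r + n"
    using funpow_bounce_map_reach[of "n - 1"] funpow_bounce_map_le[of "r + 1" "n - 1"] n_pos by simp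
  then show ?thesis unfolding bounce_steps_def by (rule LeastI)
qed

lemma funpow_less_bounce_steps: "d < bounce_steps \<Longrightarrow> (bounce_map ^^ d) (r + 1) \<noteq> r + n"
  unfolding bounce_steps_def by (rule not_less_Least)

lemma funpow_bounce_steps_interval:
  "r < x \<Longrightarrow> x \<le> r + n \<Longrightarrow> (bounce_map ^^ bounce_steps) x = r + n"
  using funpow_bounce_map_mono[of "r + 1" x bounce_steps] funpow_bounce_map_le[of x bounce_steps]
    funpow_bounce_steps by simp

lemma syz_seq_even_bounce: "syz_seq a b (2*k) = (bounce_map ^^ k) a + k*n"
  by (simp add: syz_seq_even funpow_proj_end_eq_bounce_map)

lemma syz_seq_odd_bounce: "syz_seq a b (Suc (2*k)) = (bounce_map ^^ k) b + k*n"
  by (simp add: syz_seq_odd funpow_proj_end_eq_bounce_map)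

lemma syz_seq_stalls_by_bounce_steps:
  assumes "r \<le> a" "a < r + n" "a < b" "b \<le> proj_end a"
  obtains m where "m \<le> 2 * bounce_steps" "syz_seq a b (Suc m) = syz_seq a b (Suc (Suc m))"
proof -
  let ?D = bounce_steps
  have fixed: "(bounce_map ^^ j) (r + n) = r + n" for j
    using funpow_bounce_map_fixed[of j 1] by simp
  consider "a = r" | "r < a" "b \<le> r + n" | "r < a" "r + n < b" using assms(1) by linarith
  then show ?thesis
  proof cases
    case 1
    then have "b \<le> r + n" using assms(4) cs_r r_less by (simp add: proj_end_def)
    then have "syz_seq a b (Suc (2 * ?D)) = r + n + ?D*n"
      using funpow_bounce_steps_interval assms(3) 1 by (simp add: syz_seq_odd_bounce)
    moreover have "syz_seq a b (2 * Suc ?D) = r + n + ?D*n"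
      using funpow_bounce_map_fixed[of "Suc ?D" 0] 1 unfolding syz_seq_even_bounce by simp
    ultimately show ?thesis using that[of "2 * ?D"] by simp
  next
    case 2
    have "0 < ?D"
      using funpow_bounce_steps assms(2) 2 by (cases ?D) auto
    then have "2 * ?D = Suc (2 * ?D - 1)" by simp
    moreover have "syz_seq a b (2 * ?D) = r + n + ?D*n" "syz_seq a b (Suc (2 * ?D)) = r + n + ?D*n"
      using funpow_bounce_steps_interval 2 assms(2,3) by (simp_all add: syz_seq_even_bounce syz_seq_odd_bounce)
    ultimately show ?thesis using that[of "2 * ?D - 1"] by simp
  next
    case 3
    have "bounce_map a \<le> r + n" using funpow_bounce_map_le[of a 1] assms(2) by simp
    then have "b - n \<le> r + n" "b = (b - n) + 1*n"
      using assms(4) 3 proj_end_eq_bounce_map[of a] by simp_all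
    then have "(bounce_map ^^ ?D) b = r + 2*n"
      using funpow_bounce_steps_interval[of "b - n"] funpow_bounce_map_add_period[of ?D "b - n" 1] 3
      by (metis add.assoc add_diff_cancel_right' less_diff_conv mult_2 mult_1)
    then have "syz_seq a b (Suc (2 * ?D)) = r + 2*n + ?D*n" by (simp add: syz_seq_odd_bounce)
    moreover have "syz_seq a b (2 * Suc ?D) = r + 2*n + ?D*n"
      using funpow_bounce_steps_interval[of a] fixed[of 1] 3 assms(2)
      unfolding syz_seq_even_bounce by simp
    ultimately show ?thesis using that[of "2 * ?D"] by simp
  qed
qed

lemma proj_dim_le_bounce_steps:
  assumes "M \<in> indec_modules cs"
  shows "proj_dim cs M \<le> enat (2 * bounce_steps)"
proof -
  obtain i l where M: "M = (i, l)" by fastforce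
  define a where "a = (if r \<le> i then i else i + n)"
  have "i < n" "1 \<le> l" using assms M by (auto simp: indec_modules_def length_cs)
  then have "a mod n = i" "r \<le> a" "a < r + n" unfolding a_def using r_less by auto
  then have module: "M = module_of a (a + l)" and "a + l \<le> proj_end a"
    using indec_module_eq_module_of assms M by auto
  obtain m where "m \<le> 2 * bounce_steps"
    and "syz_seq a (a + l) (Suc m) = syz_seq a (a + l) (Suc (Suc m))"
    using syz_seq_stalls_by_bounce_steps[of a "a + l"] \<open>r \<le> a\<close> \<open>a < r + n\<close> \<open>1 \<le> l\<close>
      \<open>a + l \<le> proj_end a\<close> by auto
  then show ?thesis
    using proj_dim_module_of_le[of a "a + l" m] \<open>a + l \<le> proj_end a\<close> module
    by (simp add: order.trans)
qed

lemma proj_dim_simple_minimal: "proj_dim cs (r, 1) = enat (2 * bounce_steps)"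
proof -
  let ?x = "syz_seq r (r + 1)"
  have even: "?x (2*k) = r + k*n" for k
    using funpow_bounce_map_fixed[of k 0] by (simp add: syz_seq_even_bounce)
  have odd: "?x (Suc (2*k)) = (bounce_map ^^ k) (r + 1) + k*n" for k
    by (rule syz_seq_odd_bounce)
  have "?x (Suc j) \<noteq> ?x (Suc (Suc j))" if "j < 2 * bounce_steps" for j
  proof (cases "even j")
    case True
    then obtain k where "j = 2*k" by blast
    then show ?thesis
      using funpow_less_bounce_steps[of k] that odd[of k] even[of "Suc k"] by simp
  next
    case False
    then obtain k where "j = Suc (2*k)" by (metis oddE Suc_eq_plus1)
    then show ?thesis
      using funpow_bounce_map_ge[of "r + 1" "Suc k"] odd[of "Suc k"] even[of "Suc k"] by simp
  qed
  moreover have "?x (Suc (2 * bounce_steps)) = ?x (Suc (Suc (2 * bounce_steps)))"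
    using odd[of bounce_steps] even[of "Suc bounce_steps"] funpow_bounce_steps by simp
  moreover have "r + 1 \<le> proj_end r" using proj_end_ge[of r] n_pos by simp
  ultimately have "proj_dim cs (module_of r (r + 1)) = enat (2 * bounce_steps)"
    by (intro proj_dim_module_of_eq) auto
  then show ?thesis using r_less by (simp add: module_of_def)
qed

lemma gldim_eq_bounce_steps: "gldim cs = enat (2 * bounce_steps)"
proof (rule antisym)
  show "gldim cs \<le> enat (2 * bounce_steps)"
    unfolding gldim_def by (rule SUP_least) (rule proj_dim_le_bounce_steps)
  have "(r, 1) \<in> indec_modules cs" using r_less cs_r n_pos by (auto simp: indec_modules_def length_cs)
  then show "enat (2 * bounce_steps) \<le> gldim cs"
    using proj_dim_le_gldim proj_dim_simple_minimal by metis
qed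

end

section \<open>Kupisch series and Dyck paths\<close>

definition kupisch_area :: "nat \<Rightarrow> nat list \<Rightarrow> nat list" where
  "kupisch_area n cs = map (\<lambda>c. c + 1 - n) (tl cs) @ [1]"

lemma kupisch_dyck_iff: "kupisch_dyck n cs p \<longleftrightarrow> cs ! 0 = n \<and> area_seq p = kupisch_area n cs"
  unfolding kupisch_dyck_def kupisch_area_def ..

context unique_minimal_projective
begin

lemma rotate_nth_0: "rotate r cs ! 0 = n"
  using length_cs n_pos r_less cs_r by (simp add: nth_rotate)

lemma kupisch_iso_imp_rotate:
  assumes "kupisch_iso cs ds" "ds ! 0 = n"
  shows "ds = rotate r cs"
proof -
  have "\<exists>k. ds = rotate k cs"
    using assms(1) unfolding kupisch_iso_def by (metis rotate0 id_apply)
  then obtain k where ds: "ds = rotate k cs" ..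
  then have "cs ! (k mod n) = n" using assms(2) length_cs n_pos by (simp add: nth_rotate)
  then have "k mod n = r" using minimal_unique n_pos by simp
  then show ?thesis using ds length_cs by (metis rotate_conv_mod)
qed

lemma length_kupisch_area_rotate: "length (kupisch_area n (rotate r cs)) = n"
  unfolding kupisch_area_def using length_cs n_pos by simp

lemma kupisch_area_rotate_nth:
  assumes "b < n - 1"
  shows "kupisch_area n (rotate r cs) ! b = cs ! ((r + b + 1) mod n) + 1 - n"
proof -
  have "kupisch_area n (rotate r cs) ! b = rotate r cs ! Suc b + 1 - n"
    unfolding kupisch_area_def using assms length_cs by (simp add: nth_append nth_tl)
  also have "rotate r cs ! Suc b = cs ! ((r + b + 1) mod n)"
    using assms length_cs by (simp add: nth_rotate)
  finally show ?thesis .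
qed

lemma kupisch_area_rotate_last: "kupisch_area n (rotate r cs) ! (n - 1) = 1"
  unfolding kupisch_area_def using length_cs n_pos by (simp add: nth_append)

lemma area_sequence_kupisch_area: "area_sequence (n - 1) (kupisch_area n (rotate r cs))"
  unfolding area_sequence_def
proof (intro conjI allI impI)
  let ?A = "kupisch_area n (rotate r cs)"
  show "length ?A = n - 1 + 1" "?A ! (n - 1) = 1"
    using length_kupisch_area_rotate kupisch_area_rotate_last n_pos by simp_all
  fix b assume "b < n - 1"
  define j where "j = (r + b + 1) mod n"
  have "j < n" "j \<noteq> r"
    unfolding j_def using \<open>b < n - 1\<close> r_less by (auto simp: mod_if split: if_splits)
  then have "n < cs ! j" using n_le_cs minimal_unique le_neq_implies_less by blast
  then show "2 \<le> ?A ! b" using kupisch_area_rotate_nth[OF \<open>b < n - 1\<close>] j_def by simp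
  have succ: "(j + 1) mod n = (r + Suc b + 1) mod n" unfolding j_def by (simp add: mod_Suc_eq)
  show "?A ! b \<le> ?A ! Suc b + 1"
  proof (cases "Suc b < n - 1")
    case True
    then show ?thesis
      using kupisch_area_rotate_nth[OF \<open>b < n - 1\<close>] kupisch_area_rotate_nth[OF True]
        cs_le_succ[OF \<open>j < n\<close>] succ n_le_cs[of "(r + Suc b + 1) mod n"] n_pos j_def by simp
  next
    case False
    then have "Suc b = n - 1" using \<open>b < n - 1\<close> by simp
    then have "r + Suc b + 1 = r + n" by simp
    then have "(r + Suc b + 1) mod n = r" using r_less by (metis mod_add_self2 mod_less)
    then have "cs ! j \<le> n + 1" using cs_le_succ[OF \<open>j < n\<close>] succ cs_r by simp
    then show ?thesis
      using kupisch_area_rotate_nth[OF \<open>b < n - 1\<close>] kupisch_area_rotate_last \<open>Suc b = n - 1\<close> j_def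
      by simp
  qed
qed

lemma bounce_pts_kupisch_area:
  "bounce_pts (kupisch_area n (rotate r cs)) t + r + 1 = (bounce_map ^^ t) (r + 1)"
proof (induction t)
  case (Suc t)
  let ?A = "kupisch_area n (rotate r cs)"
  define b where "b = bounce_pts ?A t"
  define y where "y = (bounce_map ^^ t) (r + 1)"
  have y: "y = b + r + 1" using Suc b_def y_def by simp
  have "y \<le> r + n" unfolding y_def using funpow_bounce_map_le n_pos by simp
  show ?case
  proof (cases "b = n - 1")
    case True
    then have "y = r + n" using y n_pos by simp
    then have "bounce_map y = r + n" using funpow_bounce_map_fixed[of 1 1] by simp
    then show ?thesis using True kupisch_area_rotate_last b_def y_def \<open>y = r + n\<close> n_pos by simp
  next
    case False
    then have "b < n - 1" using y \<open>y \<le> r + n\<close> by simp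
    have "n \<le> cs ! (y mod n)" using n_le_cs n_pos by simp
    moreover have "?A ! b = cs ! (y mod n) + 1 - n"
      using kupisch_area_rotate_nth[OF \<open>b < n - 1\<close>] y by (simp add: add.commute add.left_commute)
    ultimately show ?thesis
      using y y_def b_def unfolding bounce_map_def proj_end_def by simp
  qed
qed simp

lemma bounce_count_seq_kupisch_area:
  "bounce_count_seq (kupisch_area n (rotate r cs)) = bounce_steps"
proof -
  have "bounce_pts (kupisch_area n (rotate r cs)) d = length (kupisch_area n (rotate r cs)) - 1
    \<longleftrightarrow> (bounce_map ^^ d) (r + 1) = r + n" for d
    using bounce_pts_kupisch_area[of d] length_kupisch_area_rotate n_pos by auto
  then show ?thesis unfolding bounce_count_seq_def bounce_steps_def by simp
qed

lemma exists_kupisch_dyck: "\<exists>ds p. kupisch_iso cs ds \<and> dyck_path (n - 1) p \<and> kupisch_dyck n ds p"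
proof -
  obtain p where "dyck_path (n - 1) p" "area_seq p = kupisch_area n (rotate r cs)"
    using area_sequence_imp_area_seq[OF area_sequence_kupisch_area] .
  then show ?thesis
    using kupisch_iso_rotate rotate_nth_0 unfolding kupisch_dyck_iff by blast
qed

lemma kupisch_dyck_path_unique:
  assumes "kupisch_iso cs ds" "kupisch_iso cs ds'" "dyck_path (n - 1) p" "dyck_path (n - 1) p'"
    "kupisch_dyck n ds p" "kupisch_dyck n ds' p'"
  shows "p = p'"
  using assms kupisch_iso_imp_rotate dyck_path_area_seq_inj unfolding kupisch_dyck_iff by metis

lemma gldim_eq_bounce_count:
  assumes "kupisch_iso cs ds" "kupisch_dyck n ds p"
  shows "gldim cs = enat (2 * bounce_count p)"
  using assms kupisch_iso_imp_rotate gldim_eq_bounce_steps bounce_count_seq_kupisch_area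
  unfolding kupisch_dyck_iff bounce_count_def by metis

end

lemma unique_minimal_projectiveI:
  assumes "sincere_nakayama n cs" "card {i. i < n \<and> cs ! i = n} = 1"
  obtains r where "unique_minimal_projective n cs r"
proof -
  obtain r where r: "{i. i < n \<and> cs ! i = n} = {r}" using assms(2) by (rule card_1_singletonE)
  then have "r < n" "cs ! r = n" "\<And>i. i < n \<Longrightarrow> cs ! i = n \<Longrightarrow> i = r" by auto
  then show ?thesis
    using that assms(1) unique_minimal_projective.intro unique_minimal_projective_axioms.intro by metis
qed

lemma gldim_finite_iff_unique_minimal:
  assumes "sincere_nakayama n cs"
  shows "gldim cs \<noteq> \<infinity> \<longleftrightarrow> card {i. i < n \<and> cs ! i = n} = 1"
proof
  assume "card {i. i < n \<and> cs ! i = n} = 1"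
  with assms obtain r where "unique_minimal_projective n cs r"
    by (rule unique_minimal_projectiveI)
  then show "gldim cs \<noteq> \<infinity>" by (simp add: unique_minimal_projective.gldim_eq_bounce_steps)
next
  assume "gldim cs \<noteq> \<infinity>"
  then show "card {i. i < n \<and> cs ! i = n} = 1"
    using sincere_nakayama.gldim_infinite_unless_unique_minimal[OF assms] by (rule contrapos_np)
qed

lemma eq_rotate_if_rotate_eq:
  assumes "length ys = n" "k < n" "rotate j xs = rotate k ys"
  shows "ys = rotate (n - k + j) xs"
proof -
  have "rotate (n - k + j) xs = rotate (n - k) (rotate j xs)" by (simp add: rotate_rotate)
  also have "\<dots> = rotate (n - k) (rotate k ys)" using assms(3) by simp
  also have "\<dots> = ys" using assms(1,2) by (simp add: rotate_rotate)
  finally show ?thesis by simp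
qed

lemma kupisch_area_inj:
  assumes "length ds = length ds'" "ds ! 0 = ds' ! 0" "\<forall>c \<in> set ds \<union> set ds'. n \<le> c + 1"
    and "kupisch_area n ds = kupisch_area n ds'"
  shows "ds = ds'"
proof (cases "ds = []")
  case False
  then have "ds' \<noteq> []" using assms(1) by auto
  have "set (tl ds) \<union> set (tl ds') \<subseteq> {c. n \<le> c + 1}"
    using assms(3) False \<open>ds' \<noteq> []\<close> by (auto dest: list.set_sel(2))
  moreover have "inj_on (\<lambda>c. c + 1 - n) {c. n \<le> c + 1}" by (auto intro: inj_onI)
  ultimately have "inj_on (\<lambda>c. c + 1 - n) (set (tl ds) \<union> set (tl ds'))" by (rule inj_on_subset[rotated])
  moreover have "map (\<lambda>c. c + 1 - n) (tl ds) = map (\<lambda>c. c + 1 - n) (tl ds')"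
    using assms(4) unfolding kupisch_area_def by simp
  ultimately have "tl ds = tl ds'" using inj_on_map_eq_map by blast
  then show ?thesis
    using assms(2) False \<open>ds' \<noteq> []\<close> by (cases ds; cases ds') auto
qed (use assms(1) in simp)

lemma kupisch_iso_if_same_dyck_path:
  assumes "unique_minimal_projective n cs r" "unique_minimal_projective n cs' r'"
    and "kupisch_iso cs ds" "kupisch_iso cs' ds'" "kupisch_dyck n ds p" "kupisch_dyck n ds' p"
  shows "kupisch_iso cs cs'"
proof -
  interpret U: unique_minimal_projective n cs r by fact
  interpret U': unique_minimal_projective n cs' r' by fact
  have ds: "ds = rotate r cs" and ds': "ds' = rotate r' cs'"
    using assms(3-6) U.kupisch_iso_imp_rotate U'.kupisch_iso_imp_rotate
    unfolding kupisch_dyck_iff by auto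
  have "\<forall>c \<in> set ds \<union> set ds'. n \<le> c + 1"
    using U.n_le_set_cs U'.n_le_set_cs unfolding ds ds' by fastforce
  moreover have "ds ! 0 = ds' ! 0" "kupisch_area n ds = kupisch_area n ds'"
    using assms(5,6) unfolding kupisch_dyck_iff by auto
  moreover have "length ds = length ds'" using ds ds' U.length_cs U'.length_cs by simp
  ultimately have "ds = ds'" using kupisch_area_inj by blast
  then have "cs' = rotate (n - r' + r) cs"
    using eq_rotate_if_rotate_eq[OF U'.length_cs U'.r_less] ds ds' by simp
  then show ?thesis by (simp add: U.kupisch_iso_rotate)
qed

definition kupisch_of_area :: "nat \<Rightarrow> nat list \<Rightarrow> nat list" where
  "kupisch_of_area n A = n # map (\<lambda>a. a + n - 1) (butlast A)"

lemma kupisch_of_area_nth: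
  assumes "length A = n" "0 < i" "i < n"
  shows "kupisch_of_area n A ! i = A ! (i - 1) + n - 1"
  using assms unfolding kupisch_of_area_def by (cases i) (auto simp: nth_butlast)

lemma kupisch_area_kupisch_of_area:
  assumes "1 \<le> n" "area_sequence (n - 1) A"
  shows "kupisch_area n (kupisch_of_area n A) = A"
proof -
  have "a + n - 1 + 1 - n = a" for a using assms(1) by simp
  then have "map (\<lambda>c. c + 1 - n) (tl (kupisch_of_area n A)) = butlast A"
    unfolding kupisch_of_area_def by (simp add: comp_def)
  moreover have A: "length A = n" "A ! (n - 1) = 1" using assms unfolding area_sequence_def by auto
  then have "A \<noteq> []" using assms(1) by auto
  with A have "A = butlast A @ [1]" using append_butlast_last_id[of A] by (simp add: last_conv_nth)
  ultimately show ?thesis unfolding kupisch_area_def by simp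
qed

lemma unique_minimal_projective_kupisch_of_area:
  assumes "1 \<le> n" "area_sequence (n - 1) A"
  shows "unique_minimal_projective n (kupisch_of_area n A) 0"
proof -
  let ?cs = "kupisch_of_area n A"
  have A: "length A = n" "A ! (n - 1) = 1" "\<And>k. k < n - 1 \<Longrightarrow> 2 \<le> A ! k \<and> A ! k \<le> A ! Suc k + 1"
    using assms unfolding area_sequence_def by auto
  note nth = kupisch_of_area_nth[OF A(1)]
  have len: "length ?cs = n" and nth_0: "?cs ! 0 = n"
    unfolding kupisch_of_area_def using A(1) assms(1) by auto
  have gt: "n < ?cs ! i" if "0 < i" "i < n" for i
  proof -
    have "2 \<le> A ! (i - 1)" using A(3)[of "i - 1"] that by simp
    then show ?thesis using nth[OF that] by simp
  qed
  have succ: "?cs ! i \<le> ?cs ! ((i + 1) mod n) + 1" if "i < n" "i \<noteq> 0" for i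
  proof (cases "i + 1 < n")
    case True
    moreover have "A ! (i - 1) \<le> A ! i + 1" using A(3)[of "i - 1"] True \<open>i \<noteq> 0\<close> by simp
    ultimately show ?thesis using nth[of i] nth[of "i + 1"] \<open>i \<noteq> 0\<close> by simp
  next
    case False
    then have "i + 1 = n" using \<open>i < n\<close> by simp
    then have "(i + 1) mod n = 0" "i - 1 < n - 1" "Suc (i - 1) = n - 1"
      using \<open>i \<noteq> 0\<close> by auto
    moreover from this have "A ! (i - 1) \<le> 2" using A(2) A(3)[of "i - 1"] by simp
    ultimately show ?thesis using nth[of i] nth_0 \<open>i \<noteq> 0\<close> \<open>i < n\<close> by simp
  qed
  have "?cs ! 0 \<le> ?cs ! ((0 + 1) mod n) + 1" using nth_0 gt[of 1] by (cases "1 < n") auto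
  with succ have "?cs ! i \<le> ?cs ! ((i + 1) mod n) + 1" if "i < n" for i
    using that by (cases "i = 0") auto
  moreover have "n \<le> ?cs ! i" if "i < n" for i using gt[of i] nth_0 that by (cases "i = 0") auto
  ultimately have "sincere_nakayama n ?cs"
    unfolding sincere_nakayama_iff using len assms(1) by blast
  moreover have "i = 0" if "i < n" "?cs ! i = n" for i using gt[of i] that by (cases "i = 0") auto
  ultimately show ?thesis
    by (intro unique_minimal_projective.intro unique_minimal_projective_axioms.intro)
      (use nth_0 assms(1) in auto)
qed

lemma exists_kupisch_of_dyck_path:
  assumes "1 \<le> n" "dyck_path (n - 1) p"
  shows "\<exists>cs. sincere_nakayama n cs \<and> gldim cs \<noteq> \<infinity> \<and> kupisch_dyck n cs p"
proof -
  let ?cs = "kupisch_of_area n (area_seq p)"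
  have area: "kupisch_area n ?cs = area_seq p"
    and U: "unique_minimal_projective n ?cs 0"
    using kupisch_area_kupisch_of_area unique_minimal_projective_kupisch_of_area assms
      dyck_path_area_sequence by blast+
  interpret U: unique_minimal_projective n ?cs 0 by (rule U)
  have "kupisch_dyck n ?cs p" unfolding kupisch_dyck_iff using U.rotate_nth_0 area by simp
  then show ?thesis using U.sincere_nakayama_axioms U.gldim_eq_bounce_steps by auto
qed

theorem theorem4p7:
  fixes n :: nat
  assumes "n \<ge> 1"
  defines "S \<equiv> {cs. nakayama n cs \<and> sincere cs \<and> gldim cs \<noteq> \<infinity>}"
  shows
    "(\<forall>cs. nakayama n cs \<and> sincere cs \<longrightarrow>
        (gldim cs \<noteq> \<infinity> \<longleftrightarrow> card {i. i < n \<and> cs ! i = n} = 1))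
   \<and> (\<forall>cs \<in> S. \<exists>ds p. kupisch_iso cs ds \<and> dyck_path (n - 1) p \<and> kupisch_dyck n ds p)
   \<and> (\<forall>cs \<in> S. \<forall>ds ds' p p'. kupisch_iso cs ds \<and> kupisch_iso cs ds' \<and>
        dyck_path (n - 1) p \<and> dyck_path (n - 1) p' \<and>
        kupisch_dyck n ds p \<and> kupisch_dyck n ds' p' \<longrightarrow> p = p')
   \<and> (\<forall>cs \<in> S. \<forall>cs' \<in> S. \<forall>ds ds' p. kupisch_iso cs ds \<and> kupisch_iso cs' ds' \<and>
        dyck_path (n - 1) p \<and> kupisch_dyck n ds p \<and> kupisch_dyck n ds' p \<longrightarrow> kupisch_iso cs cs')
   \<and> (\<forall>p. dyck_path (n - 1) p \<longrightarrow> (\<exists>cs \<in> S. kupisch_dyck n cs p))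
   \<and> (\<forall>cs \<in> S. \<forall>ds p. kupisch_iso cs ds \<and> dyck_path (n - 1) p \<and> kupisch_dyck n ds p \<longrightarrow>
        gldim cs = enat (2 * bounce_count p))"
proof -
  have S_iff: "cs \<in> S \<longleftrightarrow> sincere_nakayama n cs \<and> gldim cs \<noteq> \<infinity>" for cs
    unfolding S_def sincere_nakayama_def by simp
  have unique: "\<exists>r. unique_minimal_projective n cs r" if "cs \<in> S" for cs
    using that gldim_finite_iff_unique_minimal unique_minimal_projectiveI unfolding S_iff by metis
  show ?thesis
    apply (intro conjI)
    subgoal using gldim_finite_iff_unique_minimal by (simp add: sincere_nakayama_def)
    subgoal using unique unique_minimal_projective.exists_kupisch_dyck by blast
    subgoal using unique unique_minimal_projective.kupisch_dyck_path_unique by blast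
    subgoal using unique kupisch_iso_if_same_dyck_path by blast
    subgoal using exists_kupisch_of_dyck_path assms S_iff by blast
    subgoal using unique unique_minimal_projective.gldim_eq_bounce_count by blast
    done
qed

end
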